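(* For $0\le p\le1$, let $\mathcal{E}(p)$ be the qubit ensemble consisting of the states $|0\rangle,\ |1\rangle,\ (|0\rangle+|1\rangle)/\sqrt2,\ (|0\rangle-|1\rangle)/\sqrt2$ with probabilities $p/2,\ p/2,\ (1-p)/2,\ (1-p)/2$ respectively. Then $J(\mathcal{E}(p))=\frac34+\frac14|2p-1|$. In particular the BB84 ensemble $\mathcal{E}(1/2)$ has $J=3/4$.
   Context: Fidelity: $F(\rho,\sigma)=\big(\mathrm{tr}\sqrt{\rho^{1/2}\sigma\rho^{1/2}}\big)^2$. For an orthonormal basis $\{|j\rangle\}$ of $\mathbb{C}^2$ and state $\rho$, $\rho'=\sum_j\langle j|\rho|j\rangle|j\rangle\langle j|$. The ECCC of a finite ensemble is $J(\{q_i,\rho_i\})=\max_{\{|j\rangle\}}\sum_iq_iF(\rho_i,\rho_i')$, the maximum over all orthonormal bases of $\mathbb{C}^2$. Here $\{|0\rangle,|1\rangle\}$ is the computational basis. *)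

theory Defs
  imports "HOL-Analysis.Analysis"
begin

type_synonym qvec = "complex ^ 2"
type_synonym qmat = "complex ^ 2 ^ 2"

definition cinner :: "qvec \<Rightarrow> qvec \<Rightarrow> complex" where
  "cinner u v = (\<Sum>i\<in>UNIV. cnj (u $ i) * v $ i)"

definition adjointm :: "qmat \<Rightarrow> qmat" where
  "adjointm A = (\<chi> i j. cnj (A $ j $ i))"

definition psd :: "qmat \<Rightarrow> bool" where
  "psd A \<longleftrightarrow> adjointm A = A \<and> (\<forall>v. cinner v (A *v v) \<in> \<real> \<and> 0 \<le> Re (cinner v (A *v v)))"

definition msqrt :: "qmat \<Rightarrow> qmat" where
  "msqrt A = (THE B. psd B \<and> B ** B = A)"

definition mtrace :: "qmat \<Rightarrow> complex" where
  "mtrace A = (\<Sum>i\<in>UNIV. A $ i $ i)"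

definition fidelity :: "qmat \<Rightarrow> qmat \<Rightarrow> real" where
  "fidelity \<rho> \<sigma> = (Re (mtrace (msqrt (msqrt \<rho> ** \<sigma> ** msqrt \<rho>)))) ^ 2"

definition outer :: "qvec \<Rightarrow> qvec \<Rightarrow> qmat" where
  "outer u v = (\<chi> i j. u $ i * cnj (v $ j))"

definition orthonormal_basis2 :: "qvec \<Rightarrow> qvec \<Rightarrow> bool" where
  "orthonormal_basis2 u v \<longleftrightarrow> cinner u u = 1 \<and> cinner v v = 1 \<and> cinner u v = 0"

definition dephase :: "qvec \<Rightarrow> qvec \<Rightarrow> qmat \<Rightarrow> qmat" where
  "dephase u v \<rho> = (\<chi> i j. cinner u (\<rho> *v u) * outer u u $ i $ j + cinner v (\<rho> *v v) * outer v v $ i $ j)"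

text \<open>ECCC of a finite ensemble (list of probability/state pairs): maximum (supremum, which
  is attained) over orthonormal bases of C^2.\<close>
definition ECCC :: "(real \<times> qmat) list \<Rightarrow> real" where
  "ECCC E = Sup {(\<Sum>(q, \<rho>)\<leftarrow>E. q * fidelity \<rho> (dephase u v \<rho>)) | u v. orthonormal_basis2 u v}"

definition ket0 :: qvec where "ket0 = (\<chi> i. if i = 0 then 1 else 0)"
definition ket1 :: qvec where "ket1 = (\<chi> i. if i = 1 then 1 else 0)"
definition ketp :: qvec where "ketp = complex_of_real (1 / sqrt 2) *s (ket0 + ket1)"
definition ketm :: qvec where "ketm = complex_of_real (1 / sqrt 2) *s (ket0 - ket1)"

definition ensE :: "real \<Rightarrow> (real \<times> qmat) list" where
  "ensE p = [(p / 2, outer ket0 ket0), (p / 2, outer ket1 ket1),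
             ((1 - p) / 2, outer ketp ketp), ((1 - p) / 2, outer ketm ketm)]"

end

theory Submission
  imports Defs
begin

(*
  For a pure state rho = |psi><psi| one has rho^(1/2) = rho and
  rho^(1/2) sigma rho^(1/2) = <psi|sigma|psi> rho, hence F(rho, sigma) = <psi|sigma|psi>
  (fidelity_pure).  This needs uniqueness of positive semidefinite square roots of 2x2
  matrices (psd_sqrt_unique), which is proved entrywise.  For sigma the dephasing of rho in
  an orthonormal basis {u, v} this gives F = |<u|psi>|^4 + |<v|psi>|^4 = g(|<u|psi>|^2) with
  g(a) = a^2 + (1-a)^2, by completeness |<u|psi>|^2 + |<v|psi>|^2 = 1 of an orthonormal
  basis of C^2 (fidelity_dephased_pure).  So the value of the ensemble E(p) in the basis {u, v}
  is p g(a) + (1-p) g(b) with a = |<u|0>|^2 and b = |<u|+>|^2 (ensemble_value).  These two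
  coordinates of the Bloch vector of u satisfy (a - 1/2)^2 + (b - 1/2)^2 <= 1/4 (bloch_disc),
  and under this constraint the value is at most 3/4 + |2p-1|/4 (value_bound).  The bound is
  attained by the computational basis if p >= 1/2 and by the Hadamard basis if p <= 1/2, so
  it is the maximum defining the ECCC (ECCC_ensE).
*)

text \<open>Entrywise descriptions of the operations on C^2 and 2x2 matrices; the index type 2
  has the two elements 1 and 2 (= 0).\<close>
lemma two_ne_one [simp]: "(2::2) \<noteq> 1" "(1::2) \<noteq> 2"
  by auto

lemma zero_eq_two [simp]: "(0::2) = 2"
  by simp

lemma mat_eq2: "(A::'a^2^2) = B \<longleftrightarrow> A$1$1 = B$1$1 \<and> A$1$2 = B$1$2 \<and> A$2$1 = B$2$1 \<and> A$2$2 = B$2$2"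
  by (auto simp: vec_eq_iff forall_2)

lemma mmult2: "((A::complex^2^2) ** B)$i$j = A$i$1*B$1$j + A$i$2*B$2$j"
  by (simp add: matrix_matrix_mult_def sum_2)

lemma mvmult2: "((A::complex^2^2) *v x)$i = A$i$1*x$1 + A$i$2*x$2"
  by (simp add: matrix_vector_mult_def sum_2)

lemma cinner2: "cinner u v = cnj (u$1) * v$1 + cnj (u$2) * v$2"
  by (simp add: cinner_def sum_2)

lemma mtrace2: "mtrace A = A$1$1 + A$2$2"
  by (simp add: mtrace_def sum_2)

lemma scaleR_mat2: "((s::real) *\<^sub>R (A::qmat))$i$j = s *\<^sub>R A$i$j"
  by simp

lemma scaleR_complex: "(s::real) *\<^sub>R (z::complex) = of_real s * z"
  by (simp add: scaleR_conv_of_real)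

lemma cnj_mult_self: "cnj z * z = (complex_of_real (cmod z))^2" "z * cnj z = (complex_of_real (cmod z))^2"
  using complex_norm_square[of z] by (simp_all add: mult.commute)

text \<open>Transition probabilities are symmetric: <v|u> is the conjugate of <u|v>.\<close>
lemma cmod_cinner_swap: "cmod (cinner v u) = cmod (cinner u v)"
proof -
  have "cinner v u = cnj (cinner u v)"
    by (simp add: cinner2 mult.commute)
  then show ?thesis by simp
qed

definition vec2 :: "complex \<Rightarrow> complex \<Rightarrow> qvec" where
  "vec2 x y = (\<chi> i. if i = 1 then x else y)"

lemma vec2_comp [simp]: "vec2 x y $ 1 = x" "vec2 x y $ 2 = y"
  by (auto simp: vec2_def)

section \<open>Positive semidefinite 2x2 matrices and their square roots\<close>

text \<open>A PSD 2x2 matrix has the shape [[a, b], [cnj b, d]] with a, d \<ge> 0 and |b|^2 \<le> a d.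
  The inequalities come from testing the quadratic form on suitable vectors.\<close>
lemma psd_2x2_shape:
  assumes "psd B"
  obtains a d :: real and b :: complex
  where "B$1$1 = of_real a" "B$2$2 = of_real d" "B$1$2 = b" "B$2$1 = cnj b"
    and "0 \<le> a" "0 \<le> d" "(cmod b)^2 \<le> a * d"
proof -
  have herm: "B$i$j = cnj (B$j$i)" for i j
  proof -
    have "adjointm B $ i $ j = B $ i $ j"
      using assms unfolding psd_def by simp
    then show ?thesis by (simp add: adjointm_def)
  qed
  have form: "0 \<le> Re (cinner x (B *v x))" for x
    using assms unfolding psd_def by blast
  define a d b where "a = Re (B$1$1)" and "d = Re (B$2$2)" and "b = B$1$2"
  have B: "B$1$1 = of_real a" "B$2$2 = of_real d" "B$1$2 = b" "B$2$1 = cnj b"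
    using arg_cong[OF herm[of 1 1], of Im] arg_cong[OF herm[of 2 2], of Im] herm[of 2 1]
    by (simp_all add: a_def d_def b_def complex_eq_iff)
  have a0: "0 \<le> a"
    using form[of "vec2 1 0"] by (simp add: cinner2 mvmult2 B)
  have d0: "0 \<le> d"
    using form[of "vec2 0 1"] by (simp add: cinner2 mvmult2 B)
  have "(cmod b)^2 \<le> a * d"
  proof (cases "a = 0")
    case False
    have "cinner (vec2 (-b) a) (B *v vec2 (-b) a) = of_real (a * (a*d - (cmod b)^2))"
      by (simp add: cinner2 mvmult2 B cnj_mult_self)
    then have "0 \<le> a * (a*d - (cmod b)^2)"
      using form[of "vec2 (-b) a"] by simp
    then show ?thesis
      using False a0 by (simp add: zero_le_mult_iff)
  next
    case True
    have "cinner (vec2 (d + 1) (- cnj b)) (B *v vec2 (d + 1) (- cnj b))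
        = - (of_real d + 2) * (cnj b * b)"
      by (simp add: cinner2 mvmult2 B True algebra_simps)
    then have "0 \<le> - (d + 2) * (cmod b)^2"
      using form[of "vec2 (d + 1) (- cnj b)"] by (simp add: cnj_mult_self)
    moreover have "0 \<le> (d + 2) * (cmod b)^2"
      using d0 by simp
    ultimately have "(d + 2) * (cmod b)^2 = 0"
      by linarith
    then show ?thesis
      using True d0 by (auto simp: mult_eq_0_iff)
  qed
  then show thesis
    using that B a0 d0 by blast
qed

text \<open>Scalar core of the uniqueness of PSD square roots: the data (a, d, b) of a PSD matrix
  is determined by the entries a^2 + |b|^2, d^2 + |b|^2, (a + d) b of its square.
  The determinant a d - |b|^2 and the trace a + d are recovered first.\<close>
lemma psd_data_from_square:
  fixes a d a' d' :: real and b b' :: complex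
  assumes a0: "a \<ge> 0" and d0: "d \<ge> 0" and n0: "(cmod b)^2 \<le> a*d"
    and a0': "a' \<ge> 0" and d0': "d' \<ge> 0" and n0': "(cmod b')^2 \<le> a'*d'"
    and e1: "a^2 + (cmod b)^2 = a'^2 + (cmod b')^2"
    and e2: "d^2 + (cmod b)^2 = d'^2 + (cmod b')^2"
    and e3: "complex_of_real (a+d) * b = complex_of_real (a'+d') * b'"
  shows "a = a' \<and> d = d' \<and> b = b'"
proof -
  define n n' where "n = (cmod b)^2" and "n' = (cmod b')^2"
  have "\<bar>a+d\<bar> * cmod b = \<bar>a'+d'\<bar> * cmod b'"
    using arg_cong[OF e3, of cmod] by (simp only: norm_mult norm_of_real)
  then have "(a+d) * cmod b = (a'+d') * cmod b'"
    using a0 d0 a0' d0' by simp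
  then have e3': "(a+d)^2 * n = (a'+d')^2 * n'"
    unfolding n_def n'_def by (metis power_mult_distrib)
  have "(a*d - n)^2 = (a^2+n)*(d^2+n) - (a+d)^2*n"
    and "(a'*d' - n')^2 = (a'^2+n')*(d'^2+n') - (a'+d')^2*n'"
    by (simp_all add: power2_eq_square algebra_simps)
  then have "(a*d - n)^2 = (a'*d' - n')^2"
    using e1 e2 e3' n_def n'_def by simp
  then have det: "a*d - n = a'*d' - n'"
    using n0 n0' n_def n'_def power2_eq_iff_nonneg by (metis diff_ge_0_iff_ge)
  have "(a+d)^2 = (a^2+n) + (d^2+n) + 2*(a*d-n)"
    and "(a'+d')^2 = (a'^2+n') + (d'^2+n') + 2*(a'*d'-n')"
    by (simp_all add: power2_eq_square algebra_simps)
  then have "(a+d)^2 = (a'+d')^2"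
    using e1 e2 det n_def n'_def by simp
  then have tr: "a + d = a' + d'"
    using a0 d0 a0' d0' power2_eq_iff_nonneg by (metis add_nonneg_nonneg)
  show ?thesis
  proof (cases "a + d = 0")
    case True
    then have "a = 0" "d = 0" "a' = 0" "d' = 0" using a0 d0 a0' d0' tr by auto
    then show ?thesis using n0 n0' by simp
  next
    case False
    then have "b = b'"
      using e3 tr by (metis mult_cancel_left of_real_eq_0_iff)
    then have "a^2 = a'^2" "d^2 = d'^2" using e1 e2 by auto
    then show ?thesis
      using \<open>b = b'\<close> a0 d0 a0' d0' power2_eq_iff_nonneg by blast
  qed
qed

lemma square_2x2_hermitian:
  fixes B :: qmat
  assumes "B$1$1 = of_real a" "B$2$2 = of_real d" "B$1$2 = b" "B$2$1 = cnj b"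
  shows "(B**B)$1$1 = of_real (a^2 + (cmod b)^2)" "(B**B)$2$2 = of_real (d^2 + (cmod b)^2)"
    "(B**B)$1$2 = of_real (a + d) * b"
  using assms by (simp_all add: mmult2 cnj_mult_self power2_eq_square algebra_simps)

lemma psd_sqrt_unique:
  assumes B: "psd B" and C: "psd C" and e: "B ** B = C ** C"
  shows "B = C"
proof -
  obtain a d b where B': "B$1$1 = of_real a" "B$2$2 = of_real d" "B$1$2 = b" "B$2$1 = cnj b"
    and pB: "0 \<le> a" "0 \<le> d" "(cmod b)^2 \<le> a * d"
    using psd_2x2_shape[OF B] by blast
  obtain a' d' b' where C': "C$1$1 = of_real a'" "C$2$2 = of_real d'" "C$1$2 = b'" "C$2$1 = cnj b'"
    and pC: "0 \<le> a'" "0 \<le> d'" "(cmod b')^2 \<le> a' * d'"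
    using psd_2x2_shape[OF C] by blast
  note sqB = square_2x2_hermitian[OF B'] and sqC = square_2x2_hermitian[OF C']
  have "a = a' \<and> d = d' \<and> b = b'"
  proof (rule psd_data_from_square[OF pB pC])
    show "a^2 + (cmod b)^2 = a'^2 + (cmod b')^2"
      using sqB(1) sqC(1) e by (metis of_real_eq_iff)
    show "d^2 + (cmod b)^2 = d'^2 + (cmod b')^2"
      using sqB(2) sqC(2) e by (metis of_real_eq_iff)
    show "of_real (a + d) * b = of_real (a' + d') * b'"
      using sqB(3) sqC(3) e by metis
  qed
  then show ?thesis
    unfolding mat_eq2 using B' C' by simp
qed

lemma msqrt_eq:
  assumes "psd B" and "B ** B = M"
  shows "msqrt M = B"
  unfolding msqrt_def using assms psd_sqrt_unique by (intro the_equality) auto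

section \<open>Fidelity with a pure state\<close>

text \<open>t |psi><psi| is PSD for t \<ge> 0, its quadratic form being t |<psi|v>|^2.\<close>
lemma psd_scaled_projector:
  assumes "t \<ge> 0"
  shows "psd (t *\<^sub>R outer \<psi> \<psi>)"
proof -
  have "adjointm (t *\<^sub>R outer \<psi> \<psi>) = t *\<^sub>R outer \<psi> \<psi>"
    by (simp add: mat_eq2 adjointm_def scaleR_mat2 scaleR_complex outer_def mult.commute)
  moreover have "cinner v ((t *\<^sub>R outer \<psi> \<psi>) *v v) = of_real t * (cnj (cinner \<psi> v) * cinner \<psi> v)" for v
    by (simp add: cinner2 mvmult2 scaleR_mat2 scaleR_complex outer_def algebra_simps)
  ultimately show ?thesis
    using assms unfolding psd_def cnj_mult_self by simp
qed

lemma projector_idem: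
  assumes "cinner \<psi> \<psi> = 1"
  shows "outer \<psi> \<psi> ** outer \<psi> \<psi> = outer \<psi> \<psi>"
proof -
  have "(outer \<psi> \<psi> ** outer \<psi> \<psi>)$i$j = \<psi>$i * cnj (\<psi>$j) * cinner \<psi> \<psi>" for i j
    by (simp add: mmult2 cinner2 outer_def algebra_simps)
  then show ?thesis
    using assms by (simp add: mat_eq2 outer_def)
qed

lemma projector_sandwich:
  assumes "cinner \<psi> (\<sigma> *v \<psi>) = of_real r"
  shows "outer \<psi> \<psi> ** \<sigma> ** outer \<psi> \<psi> = r *\<^sub>R outer \<psi> \<psi>"
proof -
  have "(outer \<psi> \<psi> ** \<sigma> ** outer \<psi> \<psi>)$i$j = \<psi>$i * cnj (\<psi>$j) * cinner \<psi> (\<sigma> *v \<psi>)" for i j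
    by (simp add: mmult2 mvmult2 cinner2 outer_def algebra_simps)
  then show ?thesis
    unfolding assms by (simp add: mat_eq2 outer_def scaleR_mat2 scaleR_complex mult.commute)
qed

lemma scaleR_matrix_mult:
  "((s::real) *\<^sub>R (A::qmat)) ** (t *\<^sub>R B) = (s * t) *\<^sub>R (A ** B)"
  by (simp add: vec_eq_iff mmult2 scaleR_complex algebra_simps)

lemma fidelity_pure:
  assumes unit: "cinner \<psi> \<psi> = 1" and r: "cinner \<psi> (\<sigma> *v \<psi>) = of_real r" and r0: "0 \<le> r"
  shows "fidelity (outer \<psi> \<psi>) \<sigma> = r"
proof -
  have sqrt_proj: "msqrt (outer \<psi> \<psi>) = outer \<psi> \<psi>"
    using msqrt_eq[OF psd_scaled_projector[of 1 \<psi>]] projector_idem[OF unit] by simp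
  have sqrt_sandwich: "msqrt (r *\<^sub>R outer \<psi> \<psi>) = sqrt r *\<^sub>R outer \<psi> \<psi>"
    using msqrt_eq[OF psd_scaled_projector] r0
    by (simp add: scaleR_matrix_mult projector_idem[OF unit])
  have "mtrace (sqrt r *\<^sub>R outer \<psi> \<psi>) = of_real (sqrt r) * cinner \<psi> \<psi>"
    by (simp add: mtrace2 cinner2 scaleR_mat2 scaleR_complex outer_def algebra_simps)
  then show ?thesis
    unfolding fidelity_def sqrt_proj projector_sandwich[OF r] sqrt_sandwich using unit r0 by simp
qed

lemma unit_coordinates:
  assumes "cinner u u = 1"
  shows "(cmod (u$1))^2 + (cmod (u$2))^2 = 1"
proof -
  have "cinner u u = of_real ((cmod (u$1))^2 + (cmod (u$2))^2)"
    by (simp add: cinner2 cnj_mult_self)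
  then show ?thesis
    using assms by (metis of_real_1 of_real_eq_iff)
qed

text \<open>If the rows (x, y), (z, w) of squared moduli of an orthonormal pair have unit sums and
  x z = y w (orthogonality), then the columns have unit sums as well.\<close>
lemma squared_moduli_columns:
  fixes x y z w :: real
  assumes "x + y = 1" "z + w = 1" "x * z = y * w"
  shows "x + z = 1"
proof -
  have "x * z = (1 - x) * (1 - z)"
    using assms by (metis add_diff_cancel_left')
  then show ?thesis by (simp add: algebra_simps)
qed

lemma orthonormal_outer_sum:
  assumes "orthonormal_basis2 u v"
  shows "outer u u + outer v v = mat 1"
proof -
  have uv: "cnj (u$1) * v$1 + cnj (u$2) * v$2 = 0"
    using assms by (simp add: orthonormal_basis2_def cinner2)
  have uv': "u$1 * cnj (v$1) + u$2 * cnj (v$2) = 0"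
    using arg_cong[OF uv, of cnj] by simp
  have "cmod (cnj (u$1) * v$1) = cmod (cnj (u$2) * v$2)"
    using uv by (metis add_eq_0_iff norm_minus_cancel)
  then have orth: "(cmod (u$1))^2 * (cmod (v$1))^2 = (cmod (u$2))^2 * (cmod (v$2))^2"
    by (simp add: norm_mult flip: power_mult_distrib)
  have nu: "(cmod (u$1))^2 + (cmod (u$2))^2 = 1" and nv: "(cmod (v$1))^2 + (cmod (v$2))^2 = 1"
    using assms unit_coordinates by (auto simp: orthonormal_basis2_def)
  have col1: "(cmod (u$1))^2 + (cmod (v$1))^2 = 1"
    by (rule squared_moduli_columns[OF nu nv orth])
  have col2: "(cmod (u$2))^2 + (cmod (v$2))^2 = 1"
    by (rule squared_moduli_columns[OF _ _ orth[symmetric]]) (use nu nv in simp_all)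
  have c1: "cnj (u$1) * u$1 + cnj (v$1) * v$1 = 1" and c2: "cnj (u$2) * u$2 + cnj (v$2) * v$2 = 1"
    using col1 col2 by (simp_all add: cnj_mult_self flip: of_real_add of_real_power)
  have "(cmod (u$1))^2 = (cmod (v$2))^2" and "(cmod (v$1))^2 = (cmod (u$2))^2"
    using nu nv col1 col2 by linarith+
  then have "cnj (u$1) * u$1 = cnj (v$2) * v$2" and "cnj (v$1) * v$1 = cnj (u$2) * u$2"
    unfolding cnj_mult_self by (metis of_real_power)+
  then have cross: "u$1 * cnj (u$2) + v$1 * cnj (v$2) = 0"
    using uv uv' c1 by algebra
  have cross': "cnj (u$1) * u$2 + cnj (v$1) * v$2 = 0"
    using arg_cong[OF cross, of cnj] by simp
  show ?thesis
    using c1 c2 cross cross'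
    by (simp add: mat_eq2 outer_def mat_def algebra_simps)
qed

lemma cinner_outer: "cinner w (outer u u *v w) = of_real ((cmod (cinner u w))^2)"
proof -
  have "cinner w (outer u u *v w) = cnj (cinner u w) * cinner u w"
    by (simp add: cinner2 mvmult2 outer_def algebra_simps)
  then show ?thesis
    by (simp add: cnj_mult_self)
qed

lemma orthonormal_completeness:
  assumes "orthonormal_basis2 u v" and "cinner w w = 1"
  shows "(cmod (cinner u w))^2 + (cmod (cinner v w))^2 = 1"
proof -
  have "of_real ((cmod (cinner u w))^2 + (cmod (cinner v w))^2)
      = cinner w (outer u u *v w) + cinner w (outer v v *v w)"
    by (simp add: cinner_outer)
  also have "\<dots> = cinner w ((outer u u + outer v v) *v w)"
    by (simp add: cinner2 mvmult2 algebra_simps)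
  also have "\<dots> = 1"
    using assms by (simp add: orthonormal_outer_sum)
  finally show ?thesis
    by (metis of_real_eq_1_iff)
qed

text \<open>g(a) = a^2 + (1 - a)^2: the fidelity of a pure state with its dephasing in a basis
  where its first measurement probability is a.\<close>
definition dephased_fid :: "real \<Rightarrow> real" where
  "dephased_fid a = a^2 + (1 - a)^2"

lemma dephased_fid_flip: "dephased_fid (1 - a) = dephased_fid a"
  by (simp add: dephased_fid_def)

lemma dephased_fid_centered: "dephased_fid a = 1/2 + 2 * (a - 1/2)^2"
  by (simp add: dephased_fid_def power2_eq_square algebra_simps)

lemma cinner_dephase:
  "cinner w (dephase u v \<rho> *v w)
     = cinner u (\<rho> *v u) * cinner w (outer u u *v w) + cinner v (\<rho> *v v) * cinner w (outer v v *v w)"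
  by (simp add: dephase_def cinner2 mvmult2 algebra_simps)

lemma fidelity_dephased_pure:
  assumes ON: "orthonormal_basis2 u v" and unit: "cinner \<psi> \<psi> = 1"
  shows "fidelity (outer \<psi> \<psi>) (dephase u v (outer \<psi> \<psi>)) = dephased_fid ((cmod (cinner u \<psi>))^2)"
proof -
  define a where "a = (cmod (cinner u \<psi>))^2"
  have b: "(cmod (cinner v \<psi>))^2 = 1 - a"
    using orthonormal_completeness[OF ON unit] unfolding a_def by simp
  have "cinner \<psi> (dephase u v (outer \<psi> \<psi>) *v \<psi>) = of_real (a * a + (1 - a) * (1 - a))"
    unfolding cinner_dephase cinner_outer cmod_cinner_swap[of \<psi>] b a_def[symmetric] by simp
  from fidelity_pure[OF unit this] show ?thesis
    unfolding a_def[symmetric] dephased_fid_def by (simp add: power2_eq_square)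
qed

section \<open>The ensemble E(p)\<close>

definition ens_value :: "(real \<times> qmat) list \<Rightarrow> qvec \<Rightarrow> qvec \<Rightarrow> real" where
  "ens_value E u v = (\<Sum>(q, \<rho>)\<leftarrow>E. q * fidelity \<rho> (dephase u v \<rho>))"

lemma ECCC_ens_value: "ECCC E = Sup {ens_value E u v | u v. orthonormal_basis2 u v}"
  by (simp add: ECCC_def ens_value_def)

lemma ket_comp [simp]: "ket0 $ 1 = 0" "ket0 $ 2 = 1" "ket1 $ 1 = 1" "ket1 $ 2 = 0"
  "ketp $ 1 = 1 / sqrt 2" "ketp $ 2 = 1 / sqrt 2" "ketm $ 1 = - 1 / sqrt 2" "ketm $ 2 = 1 / sqrt 2"
  by (auto simp: ket0_def ket1_def ketp_def ketm_def)

lemma sqrt2_square: "complex_of_real (sqrt 2) * complex_of_real (sqrt 2) = 2"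
  by (simp flip: of_real_mult)

lemma computational_basis: "orthonormal_basis2 ket0 ket1"
  by (simp add: orthonormal_basis2_def cinner2)

lemma hadamard_basis: "orthonormal_basis2 ketp ketm"
  by (simp add: orthonormal_basis2_def cinner2 field_simps sqrt2_square)

lemma unit_kets: "cinner ket0 ket0 = 1" "cinner ket1 ket1 = 1" "cinner ketp ketp = 1" "cinner ketm ketm = 1"
  using computational_basis hadamard_basis by (simp_all add: orthonormal_basis2_def)

lemma basis_probability_complement:
  assumes "orthonormal_basis2 x y" and "cinner u u = 1"
  shows "(cmod (cinner u y))^2 = 1 - (cmod (cinner u x))^2"
  using orthonormal_completeness[OF assms] by (simp add: cmod_cinner_swap)

lemma ensemble_value:
  assumes ON: "orthonormal_basis2 u v"
  shows "ens_value (ensE p) u v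
    = p * dephased_fid ((cmod (cinner u ket0))^2) + (1 - p) * dephased_fid ((cmod (cinner u ketp))^2)"
proof -
  have unit: "cinner u u = 1"
    using ON by (simp add: orthonormal_basis2_def)
  note F = fidelity_dephased_pure[OF ON]
  show ?thesis
    unfolding ens_value_def ensE_def
    using F[OF unit_kets(1)] F[OF unit_kets(2)] F[OF unit_kets(3)] F[OF unit_kets(4)]
      basis_probability_complement[OF computational_basis unit]
      basis_probability_complement[OF hadamard_basis unit]
    by (simp add: dephased_fid_flip algebra_simps)
qed

text \<open>Real form of the Bloch constraint: for a unit vector (a + ib, c + id) of C^2,
  the squared moduli of its second coordinate and of the normalised sum of its coordinates
  lie in the disc of radius 1/2 around (1/2, 1/2).\<close>
lemma bloch_disc_real:
  fixes a b c d :: real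
  assumes "a^2 + b^2 + c^2 + d^2 = 1"
  shows "(a^2 + b^2 - 1/2)^2 + (((a+c)^2 + (b+d)^2)/2 - 1/2)^2 \<le> 1/4"
proof -
  define s t where "s = a^2 + b^2" and "t = c^2 + d^2"
  have "(a^2 + b^2 - (s+t)/2)^2 + (((a+c)^2 + (b+d)^2)/2 - (s+t)/2)^2 = (s+t)^2/4 - (a*d-b*c)^2"
    unfolding s_def t_def by (simp add: power2_eq_square field_simps)
  moreover have "s + t = 1"
    using assms s_def t_def by simp
  ultimately show ?thesis
    by simp
qed

text \<open>For a unit vector u, the points a = |<u|0>|^2, b = |<u|+>|^2 lie in that disc (they are
  affine images of the z- and x-coordinates of the Bloch vector of u).\<close>
lemma bloch_disc:
  assumes "cinner u u = 1"
  shows "((cmod (cinner u ket0))^2 - 1/2)^2 + ((cmod (cinner u ketp))^2 - 1/2)^2 \<le> 1/4"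
proof -
  have prob0: "(cmod (cinner u ket0))^2 = (Re (u$2))^2 + (Im (u$2))^2"
    by (simp add: cinner2 cmod_power2)
  have "cinner u ketp = cnj (u$2 + u$1) / sqrt 2"
    by (simp add: cinner2 field_simps)
  then have prob_plus:
    "(cmod (cinner u ketp))^2 = ((Re (u$2) + Re (u$1))^2 + (Im (u$2) + Im (u$1))^2) / 2"
    by (simp add: norm_divide power_divide cmod_power2) (simp add: power2_eq_square algebra_simps)
  show ?thesis
    unfolding prob0 prob_plus
  proof (rule bloch_disc_real)
    show "(Re (u$2))^2 + (Im (u$2))^2 + (Re (u$1))^2 + (Im (u$1))^2 = 1"
      using unit_coordinates[OF assms] unfolding cmod_power2 by linarith
  qed
qed

lemma value_bound:
  fixes p a b :: real
  assumes p: "0 \<le> p" "p \<le> 1" and disc: "(a - 1/2)^2 + (b - 1/2)^2 \<le> 1/4"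
  shows "p * dephased_fid a + (1 - p) * dephased_fid b \<le> 3/4 + \<bar>2*p - 1\<bar>/4"
proof -
  define x y m where "x = (a - 1/2)^2" and "y = (b - 1/2)^2" and "m = max p (1 - p)"
  have "p * x + (1 - p) * y \<le> m * x + m * y"
    unfolding x_def y_def m_def by (intro add_mono mult_right_mono) auto
  also have "\<dots> = m * (x + y)"
    by (simp add: distrib_left)
  also have "\<dots> \<le> m * (1/4)"
    using disc unfolding x_def y_def m_def by (intro mult_left_mono) auto
  finally have "p * x + (1 - p) * y \<le> m / 4"
    by simp
  have m: "m = 1/2 + \<bar>2*p - 1\<bar>/2"
    unfolding m_def by (auto simp: max_def abs_if field_simps)
  have "p * dephased_fid a + (1 - p) * dephased_fid b = 1/2 + 2 * (p * x + (1 - p) * y)"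
    unfolding dephased_fid_centered x_def y_def by (simp add: field_simps)
  also have "\<dots> \<le> 1/2 + 2 * (m / 4)"
    using \<open>p * x + (1 - p) * y \<le> m / 4\<close> by simp
  also have "\<dots> = 3/4 + \<bar>2*p - 1\<bar>/4"
    unfolding m by (simp add: field_simps)
  finally show ?thesis .
qed

lemma ens_value_le:
  assumes "orthonormal_basis2 u v" and "0 \<le> p" "p \<le> 1"
  shows "ens_value (ensE p) u v \<le> 3/4 + \<bar>2*p - 1\<bar>/4"
proof -
  have "cinner u u = 1"
    using assms(1) by (simp add: orthonormal_basis2_def)
  then show ?thesis
    unfolding ensemble_value[OF assms(1)] using value_bound[OF assms(2,3) bloch_disc] by simp
qed

lemma ket_probabilities:
  "(cmod (cinner ket0 ket0))^2 = 1" "(cmod (cinner ketp ketp))^2 = 1"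
  "(cmod (cinner ket0 ketp))^2 = 1/2" "(cmod (cinner ketp ket0))^2 = 1/2"
  by (simp_all add: unit_kets cinner2 norm_divide power_divide sqrt2_square)

lemma ens_value_attained:
  "\<exists>u v. orthonormal_basis2 u v \<and> ens_value (ensE p) u v = 3/4 + \<bar>2*p - 1\<bar>/4"
proof (cases "p \<ge> 1/2")
  case True
  have "ens_value (ensE p) ket0 ket1 = p + (1 - p) / 2"
    unfolding ensemble_value[OF computational_basis] ket_probabilities
    by (simp add: dephased_fid_def power2_eq_square)
  also have "\<dots> = 3/4 + \<bar>2*p - 1\<bar>/4"
    using True by (simp add: field_simps)
  finally show ?thesis
    using computational_basis by blast
next
  case False
  have "ens_value (ensE p) ketp ketm = p / 2 + (1 - p)"
    unfolding ensemble_value[OF hadamard_basis] ket_probabilities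
    by (simp add: dephased_fid_def power2_eq_square)
  also have "\<dots> = 3/4 + \<bar>2*p - 1\<bar>/4"
    using False by (simp add: field_simps)
  finally show ?thesis
    using hadamard_basis by blast
qed

lemma ECCC_ensE:
  assumes "0 \<le> p" "p \<le> 1"
  shows "ECCC (ensE p) = 3/4 + \<bar>2*p - 1\<bar>/4"
  unfolding ECCC_ens_value
proof (rule cSup_eq_maximum)
  show "3/4 + \<bar>2*p - 1\<bar>/4 \<in> {ens_value (ensE p) u v | u v. orthonormal_basis2 u v}"
    using ens_value_attained[of p] by (metis (mono_tags, lifting) mem_Collect_eq)
  show "x \<le> 3/4 + \<bar>2*p - 1\<bar>/4" if "x \<in> {ens_value (ensE p) u v | u v. orthonormal_basis2 u v}" for x
    using that ens_value_le[OF _ assms] by auto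
qed

theorem mainTheorem5:
  fixes p :: real
  assumes "0 \<le> p" and "p \<le> 1"
  shows "ECCC (ensE p) = 3 / 4 + \<bar>2 * p - 1\<bar> / 4 \<and> ECCC (ensE (1 / 2)) = 3 / 4"
  using ECCC_ensE[OF assms] ECCC_ensE[of "1/2"] by simp

end
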